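(* Let $A:\mathbb{R}^n\rightrightarrows\mathbb{R}^n$ be a maximally monotone operator, let $x^*$ satisfy $0\in A(x^* )$, and let $\tilde A=I-J_A$ where $J_A=(I+A)^{-1}$. Assume $\tilde A$ is differentiable. Let $X:[0,\infty)\to\mathbb{R}^n$ be a solution of $$\dot X(t)=J_A(X(t))-X(t)=-\tilde A(X(t)),\qquad X(0)=x_0.$$ Then for every $t>0$, $$\|\dot X(t)\|^2=\|\tilde A(X(t))\|^2\leqslant\frac{\|x_0-x^*\|^2}{2t}.$$
   Context: $J_A=(I+A)^{-1}$ is the resolvent of $A$ (single-valued and defined on all of $\mathbb{R}^n$ since $A$ is maximally monotone); $\tilde A=I-J_A$ is the Yosida approximation of $A$. $\|\cdot\|$ is the Euclidean norm. *)

theory Defs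
  imports "HOL-Analysis.Analysis"
begin

definition monotone_op :: "('a::real_inner \<Rightarrow> 'a set) \<Rightarrow> bool" where
  "monotone_op A \<longleftrightarrow>
     (\<forall>x y u v. u \<in> A x \<longrightarrow> v \<in> A y \<longrightarrow> inner (x - y) (u - v) \<ge> 0)"

definition graph_op :: "('a \<Rightarrow> 'a set) \<Rightarrow> ('a \<times> 'a) set" where
  "graph_op A = {(x, u). u \<in> A x}"

definition maximal_monotone :: "('a::real_inner \<Rightarrow> 'a set) \<Rightarrow> bool" where
  "maximal_monotone A \<longleftrightarrow> monotone_op A \<and>
     (\<forall>B. monotone_op B \<and> graph_op A \<subseteq> graph_op B \<longrightarrow> graph_op B = graph_op A)"

text \<open>Resolvent J_A = (I + A)^{-1}: J_A x is the unique y with x \<in> y + A y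
  (single-valued and total for maximally monotone A).\<close>
definition resolvent :: "('a::real_inner \<Rightarrow> 'a set) \<Rightarrow> 'a \<Rightarrow> 'a" where
  "resolvent A x = (THE y. x - y \<in> A y)"

definition yosida :: "('a::real_inner \<Rightarrow> 'a set) \<Rightarrow> 'a \<Rightarrow> 'a" where
  "yosida A x = x - resolvent A x"

end

theory Submission
  imports Defs
begin

(* Minty's theorem, proved in finite dimensions from Brouwer's fixed point theorem via the
   Debrunner-Flor lemma, makes the resolvent total, so F = I - J_A is firmly nonexpansive with
   F x* = 0.  Along X' = -F(X) the Lyapunov function E(t) = t |F(X t)|^2 + |X t - x*|^2 / 2 has
   derivative |F|^2 - 2t <F, DF(F)> - <X - x*, F>, which is nonpositive: <F, DF(F)> >= 0 because
   F is monotone, and <X - x*, F(X)> >= |F(X)|^2 by firm nonexpansiveness.  Hence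
   t |F(X t)|^2 <= E(t) <= E(0) = |x0 - x*|^2 / 2. *)

lemma monotone_pairs_weighted_sum_nonneg:
  fixes F :: "('a::real_inner \<times> 'a) set" and \<mu> :: "'a \<times> 'a \<Rightarrow> real"
  assumes "finite F"
    and mono: "\<And>p q. p \<in> F \<Longrightarrow> q \<in> F \<Longrightarrow> 0 \<le> inner (fst p - fst q) (snd p - snd q)"
    and \<mu>_nonneg: "\<And>p. p \<in> F \<Longrightarrow> 0 \<le> \<mu> p" and \<mu>_sum: "sum \<mu> F = 1"
    and y: "y = (\<Sum>p\<in>F. \<mu> p *\<^sub>R fst p)"
  shows "0 \<le> (\<Sum>p\<in>F. \<mu> p * inner (x - y - snd p) (y - fst p))"
proof -
  have y_diff: "y - fst p = (\<Sum>q\<in>F. \<mu> q *\<^sub>R (fst q - fst p))" for p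
    by (simp add: y scaleR_diff_right sum_subtractf flip: scaleR_left.sum) (simp add: \<mu>_sum)
  have "(\<Sum>p\<in>F. \<mu> p * inner y (y - fst p)) = inner y (\<Sum>p\<in>F. \<mu> p *\<^sub>R (y - fst p))"
    by (simp add: inner_sum_right)
  also have "(\<Sum>p\<in>F. \<mu> p *\<^sub>R (y - fst p)) = 0"
    by (simp add: scaleR_diff_right sum_subtractf \<mu>_sum flip: scaleR_left.sum y)
  finally have y_part: "(\<Sum>p\<in>F. \<mu> p * inner y (y - fst p)) = 0"
    by simp
  define S where "S = (\<Sum>p\<in>F. \<Sum>q\<in>F. \<mu> p * \<mu> q * inner (x - snd p) (fst q - fst p))"
  have S_eq: "(\<Sum>p\<in>F. \<mu> p * inner (x - snd p) (y - fst p)) = S"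
    unfolding S_def y_diff by (simp add: inner_sum_right sum_distrib_left mult.assoc)
  have S_swap: "S = (\<Sum>p\<in>F. \<Sum>q\<in>F. \<mu> q * \<mu> p * inner (x - snd q) (fst p - fst q))"
    unfolding S_def by (rule sum.swap)
  \<comment> \<open>symmetrising the double sum leaves only the monotonicity terms\<close>
  have "2 * S = (\<Sum>p\<in>F. \<Sum>q\<in>F. \<mu> p * \<mu> q *
      (inner (x - snd p) (fst q - fst p) + inner (x - snd q) (fst p - fst q)))"
    by (subst mult_2, subst (2) S_swap, unfold S_def) (simp add: sum.distrib[symmetric] algebra_simps)
  also have "\<dots> = (\<Sum>p\<in>F. \<Sum>q\<in>F. \<mu> p * \<mu> q * inner (fst p - fst q) (snd p - snd q))"
    by (intro sum.cong refl) (simp add: algebra_simps inner_diff_left inner_diff_right inner_commute)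
  also have "\<dots> \<ge> 0"
    by (intro sum_nonneg mult_nonneg_nonneg \<mu>_nonneg mono)
  finally have "0 \<le> S"
    by simp
  have "(\<Sum>p\<in>F. \<mu> p * inner (x - y - snd p) (y - fst p)) =
        (\<Sum>p\<in>F. \<mu> p * inner (x - snd p) (y - fst p)) - (\<Sum>p\<in>F. \<mu> p * inner y (y - fst p))"
    by (simp add: sum_subtractf[symmetric] inner_diff_left algebra_simps)
  then show ?thesis
    using y_part S_eq \<open>0 \<le> S\<close> by simp
qed

lemma convex_weighted_mean_mem:
  fixes a :: "'i \<Rightarrow> 'a::real_vector"
  assumes "convex K" and "finite I" and "y \<in> K"
    and "\<And>i. i \<in> I \<Longrightarrow> a i \<in> K" and c_nonneg: "\<And>i. i \<in> I \<Longrightarrow> 0 \<le> c i"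
  shows "inverse (1 + sum c I) *\<^sub>R (y + (\<Sum>i\<in>I. c i *\<^sub>R a i)) \<in> K"
proof (cases "sum c I = 0")
  case True
  then have "\<forall>i\<in>I. c i = 0"
    using \<open>finite I\<close> c_nonneg by (simp add: sum_nonneg_eq_0_iff)
  then show ?thesis
    using True \<open>y \<in> K\<close> by simp
next
  case False
  define C where "C = sum c I"
  have "0 < C"
    using False c_nonneg by (simp add: C_def order_less_le sum_nonneg)
  define z where "z = (\<Sum>i\<in>I. (c i / C) *\<^sub>R a i)"
  have "z \<in> K"
    unfolding z_def using assms \<open>0 < C\<close>
    by (intro convex_sum) (auto simp: C_def sum_divide_distrib[symmetric])
  have "inverse (1 + C) *\<^sub>R (y + (\<Sum>i\<in>I. c i *\<^sub>R a i)) = (1 - C / (1 + C)) *\<^sub>R y + (C / (1 + C)) *\<^sub>R z"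
    using \<open>0 < C\<close> by (simp add: z_def scaleR_sum_right field_simps scaleR_add_right)
  also have "\<dots> \<in> K"
    using convexD_alt[OF \<open>convex K\<close> \<open>y \<in> K\<close> \<open>z \<in> K\<close>, of "C / (1 + C)"] \<open>0 < C\<close> by simp
  finally show ?thesis
    by (simp add: C_def)
qed

lemma monotone_pairs_balanced_violations:
  fixes F :: "('a::real_inner \<times> 'a) set"
  assumes "finite F"
    and mono: "\<And>p q. p \<in> F \<Longrightarrow> q \<in> F \<Longrightarrow> 0 \<le> inner (fst p - fst q) (snd p - snd q)"
    and g_def: "g \<equiv> \<lambda>p. max 0 (- inner (x - y - snd p) (y - fst p))"
    and balance: "(\<Sum>p\<in>F. g p *\<^sub>R fst p) = sum g F *\<^sub>R y"
  shows "\<forall>p\<in>F. 0 \<le> inner (x - y - snd p) (y - fst p)"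
proof -
  have g_nonneg: "0 \<le> g p" for p
    by (simp add: g_def)
  have "sum g F = 0"
  proof (rule ccontr)
    assume "sum g F \<noteq> 0"
    then have "0 < sum g F"
      by (simp add: g_nonneg order_less_le sum_nonneg)
    then have y_mean: "y = (\<Sum>p\<in>F. (g p / sum g F) *\<^sub>R fst p)"
      using balance by (simp add: divide_inverse_commute flip: scaleR_scaleR scaleR_sum_right)
        (simp add: less_imp_neq[symmetric])
    have "0 \<le> (\<Sum>p\<in>F. (g p / sum g F) * inner (x - y - snd p) (y - fst p))"
      using \<open>0 < sum g F\<close>
      by (intro monotone_pairs_weighted_sum_nonneg[OF \<open>finite F\<close> mono _ _ y_mean])
        (auto simp: g_nonneg sum_divide_distrib[symmetric])
    also have "\<dots> = - (\<Sum>p\<in>F. g p ^ 2) / sum g F"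
    proof -
      have "(g p / sum g F) * inner (x - y - snd p) (y - fst p) = - (g p ^ 2 / sum g F)" for p
        by (simp add: g_def max_def power2_eq_square)
      then show ?thesis
        by (simp add: sum_negf sum_divide_distrib)
    qed
    also have "\<dots> < 0"
    proof -
      obtain p where "p \<in> F" "g p \<noteq> 0"
        using \<open>sum g F \<noteq> 0\<close> by (meson sum.neutral)
      then have "0 < (\<Sum>p\<in>F. g p ^ 2)"
        using \<open>finite F\<close> by (intro sum_pos2[of F p]) auto
      then show ?thesis
        using \<open>0 < sum g F\<close> by simp
    qed
    finally show False
      by simp
  qed
  then have "\<forall>p\<in>F. g p = 0"
    using \<open>finite F\<close> g_nonneg by (simp add: sum_nonneg_eq_0_iff)
  then show ?thesis
    unfolding g_def by (metis max.cobounded2 neg_le_0_iff_le)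
qed

lemma debrunner_flor_finite:
  fixes F :: "('a::euclidean_space \<times> 'a) set"
  assumes "finite F"
    and mono: "\<And>p q. p \<in> F \<Longrightarrow> q \<in> F \<Longrightarrow> 0 \<le> inner (fst p - fst q) (snd p - snd q)"
  shows "\<exists>y. \<forall>p\<in>F. 0 \<le> inner (x - y - snd p) (y - fst p)"
proof (cases "F = {}")
  case False
  \<comment> \<open>g p y measures the violation of the inequality at p; at a fixed point of T they balance\<close>
  define g where "g p y = max 0 (- inner (x - y - snd p) (y - fst p))" for p y
  define T where "T y = inverse (1 + sum (\<lambda>p. g p y) F) *\<^sub>R (y + (\<Sum>p\<in>F. g p y *\<^sub>R fst p))" for y
  define K where "K = convex hull (fst ` F)"
  have g_nonneg: "0 \<le> g p y" for p y
    by (simp add: g_def)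
  have sum_g_nonneg: "0 \<le> (\<Sum>p\<in>F. g p y)" for y
    by (simp add: sum_nonneg g_nonneg)
  have K: "compact K" "convex K" "K \<noteq> {}"
    using \<open>finite F\<close> False by (auto simp: K_def compact_convex_hull finite_imp_compact)
  have "continuous_on K (g p)" for p
    unfolding g_def by (intro continuous_intros)
  then have "continuous_on K T"
    unfolding T_def using sum_g_nonneg by (intro continuous_intros) (smt (verit))+
  moreover have "T \<in> K \<rightarrow> K"
    unfolding T_def K_def
    by (intro funcsetI convex_weighted_mean_mem \<open>finite F\<close> g_nonneg convex_convex_hull)
      (auto intro: hull_inc)
  ultimately obtain y where "T y = y"
    using brouwer[OF K] by blast
  moreover have "(1 + sum (\<lambda>p. g p y) F) *\<^sub>R T y = y + (\<Sum>p\<in>F. g p y *\<^sub>R fst p)"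
    unfolding T_def using sum_g_nonneg[of y] by (simp add: add_nonneg_eq_0_iff)
  ultimately have "(\<Sum>p\<in>F. g p y *\<^sub>R fst p) = sum (\<lambda>p. g p y) F *\<^sub>R y"
    by (simp add: algebra_simps)
  then show ?thesis
    using monotone_pairs_balanced_violations[OF \<open>finite F\<close> mono] unfolding g_def by blast
qed auto

lemma monotone_extension_inequality_bounded:
  assumes "0 \<le> inner (x - y - u) (y - a)"
  shows "norm (y - a) \<le> norm (x - u - a)"
proof -
  have "norm (y - a) ^ 2 \<le> inner (x - u - a) (y - a)"
    using assms by (simp add: power2_norm_eq_inner algebra_simps inner_diff_left inner_diff_right inner_commute)
  also have "\<dots> \<le> norm (x - u - a) * norm (y - a)"
    by (rule norm_cauchy_schwarz)
  finally show ?thesis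
    by (metis mult_right_le_imp_le norm_ge_zero power2_eq_square order_le_less)
qed

lemma monotone_extension_point:
  fixes A :: "'a::euclidean_space \<Rightarrow> 'a set"
  assumes mono: "monotone_op A" and "u0 \<in> A a0"
  shows "\<exists>y. \<forall>a u. u \<in> A a \<longrightarrow> 0 \<le> inner (x - y - u) (y - a)"
proof -
  define K where "K p = {y. 0 \<le> inner (x - y - snd p) (y - fst p)}" for p :: "'a \<times> 'a"
  have closed_K: "closed (K p)" for p
    unfolding K_def by (intro closed_Collect_le continuous_intros)
  have "bounded (K p)" for p
    using monotone_extension_inequality_bounded unfolding K_def bounded_iff
    by (metis (no_types, lifting) bounded_cball bounded_iff dist_norm mem_Collect_eq mem_cball norm_minus_commute)
  \<comment> \<open>compactness reduces the claim to the finite subsets of the graph\<close>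
  have "K (a0, u0) \<inter> (\<Inter>p\<in>graph_op A. K p) \<noteq> {}"
  proof (rule compact_imp_fip_image)
    show "compact (K (a0, u0))"
      using closed_K \<open>bounded (K (a0, u0))\<close> by (simp add: compact_eq_bounded_closed)
    fix P assume "finite P" "P \<subseteq> graph_op A"
    then have "finite (insert (a0, u0) P)" and "\<forall>p\<in>insert (a0, u0) P. snd p \<in> A (fst p)"
      using \<open>u0 \<in> A a0\<close> by (auto simp: graph_op_def)
    then have "\<exists>y. \<forall>p\<in>insert (a0, u0) P. 0 \<le> inner (x - y - snd p) (y - fst p)"
      using mono unfolding monotone_op_def by (intro debrunner_flor_finite) blast+
    then show "K (a0, u0) \<inter> (\<Inter>p\<in>P. K p) \<noteq> {}"
      unfolding K_def by blast
  qed (rule closed_K)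
  then show ?thesis
    unfolding K_def graph_op_def by fastforce
qed

lemma maximal_monotoneD: "maximal_monotone A \<Longrightarrow> monotone_op A"
  by (simp add: maximal_monotone_def)

lemma maximal_monotone_graph_nonempty:
  assumes "maximal_monotone A"
  shows "\<exists>a u. u \<in> A a"
proof -
  define B :: "'a \<Rightarrow> 'a set" where "B a = (if a = 0 then {0} else {})" for a
  have "monotone_op B"
    by (simp add: monotone_op_def B_def)
  moreover have "graph_op B \<noteq> {}"
    by (simp add: graph_op_def B_def)
  ultimately show ?thesis
    using assms unfolding maximal_monotone_def graph_op_def by blast
qed

lemma maximal_monotone_memI:
  assumes "maximal_monotone A"
    and related: "\<And>a u. u \<in> A a \<Longrightarrow> 0 \<le> inner (y - a) (v - u)"
  shows "v \<in> A y"
proof -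
  have related': "0 \<le> inner (a - y) (u - v)" if "u \<in> A a" for a u
    using related[OF that] by (simp add: inner_diff_left inner_diff_right inner_commute)
  define B where "B a = A a \<union> (if a = y then {v} else {})" for a
  have "monotone_op B"
    using maximal_monotoneD[OF assms(1)] related related' unfolding monotone_op_def B_def
    by (auto split: if_splits)
  moreover have "graph_op A \<subseteq> graph_op B"
    by (auto simp: graph_op_def B_def)
  ultimately have "graph_op B = graph_op A"
    using assms(1) by (simp add: maximal_monotone_def)
  then show ?thesis
    by (auto simp: graph_op_def B_def)
qed

theorem maximal_monotone_minty:
  fixes A :: "'a::euclidean_space \<Rightarrow> 'a set"
  assumes "maximal_monotone A"
  shows "\<exists>y. x - y \<in> A y"
proof -
  obtain a0 u0 where "u0 \<in> A a0"
    using maximal_monotone_graph_nonempty[OF assms] by blast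
  then obtain y where "\<And>a u. u \<in> A a \<Longrightarrow> 0 \<le> inner (x - y - u) (y - a)"
    using monotone_extension_point[OF maximal_monotoneD[OF assms]] by blast
  then have "x - y \<in> A y"
    by (intro maximal_monotone_memI[OF assms]) (simp add: inner_commute)
  then show ?thesis ..
qed

lemma resolvent_eqI:
  assumes "monotone_op A" and "x - y \<in> A y"
  shows "resolvent A x = y"
  unfolding resolvent_def
proof (rule the_equality)
  fix z assume "x - z \<in> A z"
  then have "0 \<le> inner (z - y) ((x - z) - (x - y))"
    using assms unfolding monotone_op_def by blast
  then have "inner (z - y) (z - y) \<le> 0"
    by (simp add: inner_diff_right inner_diff_left inner_commute)
  then show "z = y"
    by (metis eq_iff_diff_eq_0 inner_gt_zero_iff not_le)
qed (rule assms(2))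

lemma resolvent_mem:
  fixes A :: "'a::euclidean_space \<Rightarrow> 'a set"
  assumes "maximal_monotone A"
  shows "x - resolvent A x \<in> A (resolvent A x)"
proof -
  obtain y where "x - y \<in> A y"
    using maximal_monotone_minty[OF assms] by blast
  then show ?thesis
    using resolvent_eqI[OF maximal_monotoneD[OF assms]] by blast
qed

definition firmly_nonexpansive :: "('a::real_inner \<Rightarrow> 'a) \<Rightarrow> bool" where
  "firmly_nonexpansive F \<longleftrightarrow> (\<forall>x y. norm (F x - F y) ^ 2 \<le> inner (x - y) (F x - F y))"

lemma firmly_nonexpansive_monotone:
  "firmly_nonexpansive F \<Longrightarrow> 0 \<le> inner (x - y) (F x - F y)"
  unfolding firmly_nonexpansive_def by (meson order_trans zero_le_power2)

lemma yosida_firmly_nonexpansive: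
  fixes A :: "'a::euclidean_space \<Rightarrow> 'a set"
  assumes "maximal_monotone A"
  shows "firmly_nonexpansive (yosida A)"
  unfolding firmly_nonexpansive_def
proof (intro allI)
  fix x y
  have "0 \<le> inner (resolvent A x - resolvent A y) (yosida A x - yosida A y)"
    using maximal_monotoneD[OF assms] resolvent_mem[OF assms, of x] resolvent_mem[OF assms, of y]
    unfolding monotone_op_def yosida_def by blast
  moreover have "resolvent A x - resolvent A y = (x - y) - (yosida A x - yosida A y)"
    by (simp add: yosida_def)
  ultimately show "norm (yosida A x - yosida A y) ^ 2 \<le> inner (x - y) (yosida A x - yosida A y)"
    by (simp add: inner_diff_left power2_norm_eq_inner)
qed

lemma yosida_eq_0:
  assumes "monotone_op A" and "0 \<in> A x"
  shows "yosida A x = 0"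
  using resolvent_eqI[of A x x] assms by (simp add: yosida_def)

lemma has_derivative_monotone_nonneg:
  fixes F :: "'a::real_inner \<Rightarrow> 'a"
  assumes mono: "\<And>x y. 0 \<le> inner (x - y) (F x - F y)"
    and F': "(F has_derivative D) (at x)"
  shows "0 \<le> inner w (D w)"
proof (rule ccontr)
  assume "\<not> 0 \<le> inner w (D w)"
  define g where "g s = inner w (F (x + s *\<^sub>R w) - F x)" for s :: real
  have line: "((\<lambda>s. x + s *\<^sub>R w) has_derivative (\<lambda>h. h *\<^sub>R w)) (at 0)"
    by (auto intro!: derivative_eq_intros)
  have "((\<lambda>s. F (x + s *\<^sub>R w)) has_derivative (\<lambda>h. D (h *\<^sub>R w))) (at 0)"
    using diff_chain_at[OF line, of F D] F' by (simp add: o_def)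
  then have "(g has_real_derivative inner w (D w)) (at 0)"
    unfolding g_def has_field_derivative_def
    by (auto intro!: derivative_eq_intros simp: linear_cmul[OF has_derivative_linear[OF F']] mult.commute)
  then obtain d where "d > 0" and "\<And>h. 0 < h \<Longrightarrow> h < d \<Longrightarrow> g (0 + h) < g 0"
    using DERIV_neg_dec_right \<open>\<not> 0 \<le> inner w (D w)\<close> by (metis not_le)
  then have "g (d / 2) < 0" by (simp add: g_def)
  moreover have "0 \<le> (d / 2) * g (d / 2)"
    using mono[of "x + (d / 2) *\<^sub>R w" x] by (simp add: g_def)
  ultimately show False using \<open>d > 0\<close> by (simp add: zero_le_mult_iff)
qed

lemma lyapunov_has_real_derivative:
  fixes F :: "'a::real_inner \<Rightarrow> 'a"
  assumes X': "(X has_vector_derivative v) (at t)"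
    and F': "(F has_derivative D) (at (X t))"
  shows "((\<lambda>s. s * norm (F (X s)) ^ 2 + norm (X s - c) ^ 2 / 2) has_real_derivative
           (norm (F (X t)) ^ 2 + 2 * t * inner (F (X t)) (D v) + inner (X t - c) v)) (at t)"
proof -
  have FX': "((\<lambda>s. F (X s)) has_vector_derivative D v) (at t)"
    using vector_derivative_diff_chain_within[OF X', of F D] F'
    by (simp add: o_def has_derivative_at_withinI)
  show ?thesis
    using X' FX' unfolding power2_norm_eq_inner has_vector_derivative_def has_field_derivative_def
    by (auto intro!: derivative_eq_intros simp: fun_eq_iff algebra_simps inner_commute divide_simps)
qed

lemma has_vector_derivative_at_pos:
  assumes "(f has_vector_derivative f') (at t within {0..})" and "0 < t"
  shows "(f has_vector_derivative f') (at t)"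
proof -
  have "(f has_vector_derivative f') (at t within {0<..})"
    by (rule has_vector_derivative_within_subset[OF assms(1)]) auto
  then show ?thesis
    using \<open>0 < t\<close> has_vector_derivative_within_open[of t "{0<..}"] by auto
qed

lemma firmly_nonexpansive_flow_rate:
  fixes F :: "'a::real_inner \<Rightarrow> 'a" and X :: "real \<Rightarrow> 'a"
  assumes firm: "firmly_nonexpansive F" and zero: "F c = 0"
    and diff: "\<And>x. F differentiable (at x)"
    and flow: "\<And>s. 0 \<le> s \<Longrightarrow> (X has_vector_derivative - F (X s)) (at s within {0..})"
    and "0 < t"
  shows "norm (F (X t)) ^ 2 \<le> norm (X 0 - c) ^ 2 / (2 * t)"
proof -
  define E where "E s = s * norm (F (X s)) ^ 2 + norm (X s - c) ^ 2 / 2" for s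
  have E'_nonpos: "\<exists>E'. (E has_real_derivative E') (at s) \<and> E' \<le> 0" if "0 < s" for s
  proof -
    obtain D where F': "(F has_derivative D) (at (X s))"
      using diff unfolding differentiable_def by blast
    have X': "(X has_vector_derivative - F (X s)) (at s)"
      using has_vector_derivative_at_pos[OF flow] \<open>0 < s\<close> by simp
    have E': "(E has_real_derivative
        (norm (F (X s)) ^ 2 - 2 * s * inner (F (X s)) (D (F (X s))) - inner (X s - c) (F (X s)))) (at s)"
      using lyapunov_has_real_derivative[OF X' F', of c] unfolding E_def
      by (simp add: linear_neg[OF has_derivative_linear[OF F']])
    have "0 \<le> s * inner (F (X s)) (D (F (X s)))"
      using has_derivative_monotone_nonneg[OF firmly_nonexpansive_monotone[OF firm] F'] \<open>0 < s\<close>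
      by simp
    moreover have "norm (F (X s)) ^ 2 \<le> inner (X s - c) (F (X s))"
      using firm zero unfolding firmly_nonexpansive_def by (metis diff_zero)
    ultimately have "norm (F (X s)) ^ 2 - 2 * s * inner (F (X s)) (D (F (X s)))
        - inner (X s - c) (F (X s)) \<le> 0"
      by linarith
    with E' show ?thesis
      by blast
  qed
  have "continuous_on {0..} X"
    using flow by (auto simp: continuous_on_eq_continuous_within intro: has_vector_derivative_continuous)
  then have X_cont: "continuous_on {0..t} X"
    by (rule continuous_on_subset) auto
  have "continuous_on UNIV F"
    using diff by (simp add: continuous_at_imp_continuous_on differentiable_imp_continuous_within)
  then have "continuous_on {0..t} (\<lambda>s. F (X s))"
    using continuous_on_compose2[OF _ X_cont] by blast
  then have "continuous_on {0..t} E"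
    unfolding E_def by (intro continuous_intros X_cont) auto
  then have "E t \<le> E 0"
    using DERIV_nonpos_imp_decreasing_open[of 0 t E] E'_nonpos \<open>0 < t\<close> by auto
  then have "t * norm (F (X t)) ^ 2 \<le> norm (X 0 - c) ^ 2 / 2"
    unfolding E_def using zero_le_power2[of "norm (X t - c)"] by linarith
  then show ?thesis
    using \<open>0 < t\<close> by (simp add: field_simps)
qed

theorem theorem3:
  fixes A :: "'a::euclidean_space \<Rightarrow> 'a set"
    and xstar x0 :: 'a
    and X :: "real \<Rightarrow> 'a"
  assumes maxmono: "maximal_monotone A"
    and zero: "0 \<in> A xstar"
    and diff: "\<And>x. yosida A differentiable (at x)"
    and ode: "\<And>t. t \<ge> 0 \<Longrightarrow>
               (X has_vector_derivative (resolvent A (X t) - X t)) (at t within {0..})"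
    and init: "X 0 = x0"
  shows "\<forall>t>0. norm (vector_derivative X (at t)) ^ 2 = norm (yosida A (X t)) ^ 2
            \<and> norm (yosida A (X t)) ^ 2 \<le> norm (x0 - xstar) ^ 2 / (2 * t)"
proof (intro allI impI conjI)
  fix t :: real
  assume "0 < t"
  have flow: "(X has_vector_derivative - yosida A (X s)) (at s within {0..})" if "0 \<le> s" for s
    using ode[OF that] by (simp add: yosida_def)
  have "(X has_vector_derivative - yosida A (X t)) (at t)"
    using has_vector_derivative_at_pos[OF flow] \<open>0 < t\<close> by simp
  then have "vector_derivative X (at t) = - yosida A (X t)"
    by (rule vector_derivative_at)
  then show "norm (vector_derivative X (at t)) ^ 2 = norm (yosida A (X t)) ^ 2"
    by simp
  have "yosida A xstar = 0"
    using yosida_eq_0[OF maximal_monotoneD[OF maxmono] zero] .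
  then show "norm (yosida A (X t)) ^ 2 \<le> norm (x0 - xstar) ^ 2 / (2 * t)"
    using firmly_nonexpansive_flow_rate[OF yosida_firmly_nonexpansive[OF maxmono] _ diff flow \<open>0 < t\<close>]
      init by simp
qed

end
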